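(* Let $(S,* )$ be a finite cycle set of size $n$ and class $d>1$, with germ $\overline G$, and let $d=p_1^{a_1}\cdots p_r^{a_r}$ be the prime factorization of $d$. Put $\alpha_i=p_i^{a_i}$ and $\beta_i=d/\alpha_i$. Then: (i) for each $i$, $\overline G^{[\beta_i]}$ is a Sylow $p_i$-subgroup of $\overline G$; (ii) for all $i,j$, $\overline G^{[\beta_i]}\,\overline G^{[\beta_j]}=\overline G^{[\beta_j]}\,\overline G^{[\beta_i]}$ as subsets of $\overline G$; (iii) $\overline G=\overline G^{[\beta_1]}\,\overline G^{[\beta_2]}\cdots\overline G^{[\beta_r]}$.
   Context: A cycle set is a set $S$ with a binary operation $*$ such that for every $s$ the map $t\mapsto s*t$ is a bijection and $(s*t)*(s*u)=(t*s)*(t*u)$ for all $s,t,u$. Write $S=\{s_1,\dots,s_n\}$, let $\psi(s)\in\mathfrak S_n$ satisfy $s_i*s_j=s_{\psi(s_i)(j)}$, $T(s)=s*s$, and $\psi_k(s)=\psi(T^{k-1}(s))\circ\cdots\circ\psi(s)$. The class $d$ is the least $d\ge1$ with $\psi_d(s)=\mathrm{id}$ for all $s$. $P_\sigma$ is the matrix with $1$ at $(i,\sigma(i))$, zeros elsewhere; $\zeta_d=e^{2i\pi/d}$. The germ $\overline G$ is the subgroup of $GL_n(\mathbb C)$ generated by $\bar s_i=\mathrm{diag}(1,\dots,\zeta_d,\dots,1)P_{\psi(s_i)}$ ($\zeta_d$ in position $i$); it has order $d^n$. For $s\in S$ and $k\ge1$, let $\overline{s^{[k]}}=\bar s\,\overline{T(s)}\cdots\overline{T^{k-1}(s)}\in\overline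 G$, and let $\overline G^{[k]}$ be the subgroup of $\overline G$ generated by $\{\overline{s^{[k]}}: s\in S\}$. Products of subgroups are set products $AB=\{ab\}$. *)

theory Defs
  imports "HOL-Algebra.Coset" "HOL-Algebra.Generated_Groups" "Jordan_Normal_Form.Matrix"
    "HOL-Computational_Algebra.Primes"
begin

text \<open>A finite set of size n is identified with {0..<n}; the cycle set operation is
  op i j = index of s_i * s_j, i.e. psi(s_i)(j) = op i j.\<close>

definition cycle_set :: "nat \<Rightarrow> (nat \<Rightarrow> nat \<Rightarrow> nat) \<Rightarrow> bool" where
  "cycle_set n op \<longleftrightarrow>
     (\<forall>i<n. bij_betw (op i) {0..<n} {0..<n}) \<and>
     (\<forall>s<n. \<forall>t<n. \<forall>u<n. op (op s t) (op s u) = op (op t s) (op t u))"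

definition T_map :: "(nat \<Rightarrow> nat \<Rightarrow> nat) \<Rightarrow> nat \<Rightarrow> nat" where
  "T_map op s = op s s"

fun psik :: "(nat \<Rightarrow> nat \<Rightarrow> nat) \<Rightarrow> nat \<Rightarrow> nat \<Rightarrow> nat \<Rightarrow> nat" where
  "psik op 0 s = id"
| "psik op (Suc k) s = op ((T_map op ^^ k) s) \<circ> psik op k s"

definition is_class :: "nat \<Rightarrow> (nat \<Rightarrow> nat \<Rightarrow> nat) \<Rightarrow> nat \<Rightarrow> bool" where
  "is_class n op d \<longleftrightarrow> d \<ge> 1 \<and> (\<forall>s<n. \<forall>j<n. psik op d s j = j) \<and>
     (\<forall>d'. 1 \<le> d' \<and> d' < d \<longrightarrow> \<not> (\<forall>s<n. \<forall>j<n. psik op d' s j = j))"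

definition GL :: "nat \<Rightarrow> complex mat monoid" where
  "GL n = \<lparr>carrier = {A \<in> carrier_mat n n. invertible_mat A}, monoid.mult = (*), monoid.one = 1\<^sub>m n\<rparr>"

text \<open>bar s_i = diag(1,..,zeta_d (position i),..,1) * P_{psi(s_i)},
  where P_sigma has 1 at (a, sigma a).\<close>
definition bar_gen :: "nat \<Rightarrow> (nat \<Rightarrow> nat \<Rightarrow> nat) \<Rightarrow> nat \<Rightarrow> nat \<Rightarrow> complex mat" where
  "bar_gen n op d i = mat n n (\<lambda>(a, b). (if a = i then cis (2 * pi / real d) else 1) *
                                        (if b = op i a then 1 else 0))"

definition germ :: "nat \<Rightarrow> (nat \<Rightarrow> nat \<Rightarrow> nat) \<Rightarrow> nat \<Rightarrow> complex mat monoid" where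
  "germ n op d = (GL n)\<lparr>carrier := generate (GL n) (bar_gen n op d ` {0..<n})\<rparr>"

text \<open>bar(s^[k]) = bar s * bar(T s) * ... * bar(T^(k-1) s)\<close>
definition bar_pow :: "nat \<Rightarrow> (nat \<Rightarrow> nat \<Rightarrow> nat) \<Rightarrow> nat \<Rightarrow> nat \<Rightarrow> nat \<Rightarrow> complex mat" where
  "bar_pow n op d k s = foldr (\<lambda>j acc. bar_gen n op d ((T_map op ^^ j) s) * acc) [0..<k] (1\<^sub>m n)"

definition germ_k :: "nat \<Rightarrow> (nat \<Rightarrow> nat \<Rightarrow> nat) \<Rightarrow> nat \<Rightarrow> nat \<Rightarrow> complex mat set" where
  "germ_k n op d k = generate (germ n op d) (bar_pow n op d k ` {0..<n})"

definition sylow_subgroup :: "('a, 'b) monoid_scheme \<Rightarrow> nat \<Rightarrow> 'a set \<Rightarrow> bool" where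
  "sylow_subgroup G p P \<longleftrightarrow> subgroup P G \<and> card P = p ^ multiplicity p (order G)"

end

(*
  Record a word in the generators s_i by its exponent vector v, the number of occurrences of
  each letter. The cycle set identity says precisely that two adjacent letters may be swapped
  without changing the permutation part of the product of the generators, so that product is a
  monomial matrix determined by v alone: it has entry zeta_d^(v a) at (a, sigma_v a), and
  multiplying two of them adds exponent vectors twisted by sigma. Since psi_d = id, only v
  modulo d matters, so the germ is the set of d^n such matrices with v in {0..<d}^n. As s^[k]
  has exponent vector k e_s, the subgroup G^[k] for k dividing d consists of the matrices whose
  exponents are all divisible by k, which has (d/k)^n elements: for k = beta_i this is exactly
  the p_i-part of d^n. By Bezout, G^[k] G^[l] = G^[gcd k l], and the beta_i have gcd 1.
*)
theory Submission
  imports Defs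
begin

section \<open>The cofactors of the prime-power parts of d\<close>

lemma div_power_multiplicity_dvd: "(d::nat) div p ^ multiplicity p d dvd d"
  by (metis dvd_div_mult_self dvd_triv_left multiplicity_dvd)

lemma dvd_foldr_gcd_iff:
  "(q::nat) dvd foldr (\<lambda>p. gcd (k p)) ps d \<longleftrightarrow> q dvd d \<and> (\<forall>p\<in>set ps. q dvd k p)"
  by (induction ps) auto

lemma foldr_gcd_div_prime_powers:
  assumes "0 < (d::nat)" and "set ps = prime_factors d"
  shows "foldr (\<lambda>p. gcd (d div p ^ multiplicity p d)) ps d = 1"
proof (rule ccontr)
  assume "foldr (\<lambda>p. gcd (d div p ^ multiplicity p d)) ps d \<noteq> 1"
  then obtain q where "prime q" and "q dvd foldr (\<lambda>p. gcd (d div p ^ multiplicity p d)) ps d"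
    using prime_factor_nat by blast
  then have "q dvd d" and "q dvd d div q ^ multiplicity q d"
    using assms by (auto simp: dvd_foldr_gcd_iff in_prime_factors_iff)
  then show False
    using multiplicity_decompose[of d q] assms(1) prime_gt_1_nat[OF \<open>prime q\<close>] by simp
qed

section \<open>Permutations attached to words\<close>

(* The permutation part of the product of the generators along w, extended by the identity
   outside {..<n}. *)
definition word_perm :: "nat \<Rightarrow> (nat \<Rightarrow> nat \<Rightarrow> nat) \<Rightarrow> nat list \<Rightarrow> nat \<Rightarrow> nat" where
  "word_perm n op w = fold (\<lambda>i f x. if x < n then op (f i) (f x) else x) w id"

lemma word_perm_Nil [simp]: "word_perm n op [] = id"
  by (simp add: word_perm_def)

lemma word_perm_snoc [simp]:
  "word_perm n op (w @ [i]) =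
     (\<lambda>x. if x < n then op (word_perm n op w i) (word_perm n op w x) else x)"
  unfolding word_perm_def by simp

lemma word_perm_outside: "n \<le> x \<Longrightarrow> word_perm n op w x = x"
  by (induction w rule: rev_induct) auto

lemma word_perm_append_cong:
  "word_perm n op u = word_perm n op u' \<Longrightarrow> word_perm n op (u @ w) = word_perm n op (u' @ w)"
proof (induction w rule: rev_induct)
  case (snoc i w)
  then show ?case
    by (metis append_assoc word_perm_snoc)
qed simp

lemma psik_self: "psik op k s s = (T_map op ^^ k) s"
  by (induction k) (simp_all add: T_map_def[abs_def])

lemma word_perm_replicate:
  assumes "s < n"
  shows "x < n \<Longrightarrow> word_perm n op (replicate k s) x = psik op k s x"
proof (induction k arbitrary: x)
  case (Suc k)
  have "replicate (Suc k) s = replicate k s @ [s]"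
    by (simp add: replicate_append_same)
  then show ?case
    using Suc Suc.IH[OF assms] by (simp add: psik_self)
qed simp

lemma count_image_mset_inj: "inj f \<Longrightarrow> count (image_mset f M) (f a) = count M a"
  by (cases "a \<in># M") (simp_all add: count_image_mset vimage_def inj_eq not_in_iff)

fun word_of_exps :: "nat \<Rightarrow> (nat \<Rightarrow> nat) \<Rightarrow> nat list" where
  "word_of_exps 0 v = []"
| "word_of_exps (Suc m) v = word_of_exps m v @ replicate (v m) m"

lemma set_word_of_exps: "set (word_of_exps m v) \<subseteq> {..<m}"
  by (induction m) auto

lemma count_word_of_exps: "count (mset (word_of_exps m v)) j = (if j < m then v j else 0)"
  by (induction m) auto

definition perm_of_exps :: "nat \<Rightarrow> (nat \<Rightarrow> nat \<Rightarrow> nat) \<Rightarrow> (nat \<Rightarrow> nat) \<Rightarrow> nat \<Rightarrow> nat" where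
  "perm_of_exps n op v = word_perm n op (word_of_exps n v)"

lemma perm_of_exps_zero: "perm_of_exps n op (\<lambda>a. 0) = id"
proof -
  have "word_of_exps m (\<lambda>a. 0) = []" for m
    by (induction m) simp_all
  then show ?thesis
    by (simp add: perm_of_exps_def)
qed

context
  fixes n :: nat and op :: "nat \<Rightarrow> nat \<Rightarrow> nat"
  assumes cycle_set: "cycle_set n op"
begin

lemma op_bij: "i < n \<Longrightarrow> bij_betw (op i) {..<n} {..<n}"
  using cycle_set by (simp add: cycle_set_def atLeast0LessThan)

lemma word_perm_bij: "set w \<subseteq> {..<n} \<Longrightarrow> bij_betw (word_perm n op w) {..<n} {..<n}"
proof (induction w rule: rev_induct)
  case (snoc i w)
  let ?f = "word_perm n op w"
  have "?f i < n"
    using snoc bij_betwE by fastforce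
  then have "bij_betw (op (?f i)) {..<n} {..<n}"
    by (rule op_bij)
  then have "bij_betw (op (?f i) \<circ> ?f) {..<n} {..<n}"
    using snoc by (auto intro: bij_betw_trans)
  then show ?case
    by (rule bij_betw_cong[THEN iffD1, rotated]) simp
qed (simp add: bij_betw_def)

lemma word_perm_less: "set w \<subseteq> {..<n} \<Longrightarrow> x < n \<Longrightarrow> word_perm n op w x < n"
  using word_perm_bij bij_betwE by blast

lemma inj_word_perm: "set w \<subseteq> {..<n} \<Longrightarrow> inj (word_perm n op w)"
  by (rule injI) (metis bij_betw_imp_inj_on inj_onD lessThan_iff not_le word_perm_bij
      word_perm_less word_perm_outside)

(* The cycle set identity, read as a statement about words. *)
lemma word_perm_swap:
  assumes "set w \<subseteq> {..<n}" and "i < n" and "j < n"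
  shows "word_perm n op (w @ [i, j]) = word_perm n op (w @ [j, i])"
proof -
  let ?f = "word_perm n op w"
  have "op (op (?f i) (?f j)) (op (?f i) (?f x)) = op (op (?f j) (?f i)) (op (?f j) (?f x))"
    if "x < n" for x
    using cycle_set assms that word_perm_less unfolding cycle_set_def by blast
  then show ?thesis
    using assms word_perm_snoc[of n op "w @ [_]"] by (auto simp: fun_eq_iff)
qed

lemma word_perm_move_to_end:
  "set (u @ i # w) \<subseteq> {..<n} \<Longrightarrow> word_perm n op (u @ i # w) = word_perm n op (u @ w @ [i])"
proof (induction w arbitrary: u)
  case (Cons j w)
  have "word_perm n op (u @ i # j # w) = word_perm n op ((u @ [j]) @ i # w)"
    using word_perm_append_cong[OF word_perm_swap, of u i j w] Cons.prems by simp
  also have "\<dots> = word_perm n op (u @ (j # w) @ [i])"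
    using Cons.IH[of "u @ [j]"] Cons.prems by simp
  finally show ?case .
qed simp

lemma word_perm_mset_eq:
  "mset w = mset w' \<Longrightarrow> set w \<subseteq> {..<n} \<Longrightarrow> word_perm n op w = word_perm n op w'"
proof (induction w' arbitrary: w rule: rev_induct)
  case (snoc i w')
  then obtain u v where w: "w = u @ i # v"
    by (metis mset_eq_setD in_set_conv_decomp)
  have "word_perm n op w = word_perm n op ((u @ v) @ [i])"
    using word_perm_move_to_end snoc.prems w by simp
  also have "\<dots> = word_perm n op (w' @ [i])"
    using snoc w by (intro word_perm_append_cong) auto
  finally show ?case .
qed simp

lemma word_perm_append:
  assumes "set u \<subseteq> {..<n}"
  shows "set w \<subseteq> {..<n} \<Longrightarrow>
    word_perm n op (u @ w) = word_perm n op (map (word_perm n op u) w) \<circ> word_perm n op u"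
proof (induction w rule: rev_induct)
  case (snoc i w)
  then show ?case
    using assms word_perm_less word_perm_outside
    by (auto simp: fun_eq_iff simp flip: append_assoc)
qed simp

lemma word_perm_replicate_class_multiple:
  assumes "is_class n op d" and "s < n"
  shows "word_perm n op (replicate (d * k) s) = id"
proof (induction k)
  case (Suc k)
  have "word_perm n op (replicate d s) = id"
    using assms word_perm_replicate[OF \<open>s < n\<close>] word_perm_outside
    by (auto simp: fun_eq_iff is_class_def) (metis not_le)
  moreover have "set (replicate m s) \<subseteq> {..<n}" for m
    using assms by (cases m) auto
  moreover have "replicate (d * Suc k) s = replicate (d * k) s @ replicate d s"
    by (simp add: replicate_add[symmetric])
  ultimately show ?case
    using Suc word_perm_append[of "replicate (d * k) s" "replicate d s"] by simp
qed simp

lemma word_perm_eq_perm_of_exps: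
  assumes "set w \<subseteq> {..<n}" and "\<And>j. j < n \<Longrightarrow> count (mset w) j = v j"
  shows "word_perm n op w = perm_of_exps n op v"
proof -
  have "mset w = mset (word_of_exps n v)"
  proof (rule multiset_eqI)
    fix j
    show "count (mset w) j = count (mset (word_of_exps n v)) j"
      using assms by (cases "j < n") (auto simp: count_word_of_exps count_mset_0_iff)
  qed
  then show ?thesis
    unfolding perm_of_exps_def using word_perm_mset_eq assms(1) by blast
qed

lemma perm_of_exps_cong:
  assumes "\<And>a. a < n \<Longrightarrow> v a = v' a"
  shows "perm_of_exps n op v = perm_of_exps n op v'"
proof -
  have "word_perm n op (word_of_exps n v) = perm_of_exps n op v'"
    by (rule word_perm_eq_perm_of_exps[OF set_word_of_exps]) (simp add: count_word_of_exps assms)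
  then show ?thesis
    by (simp only: perm_of_exps_def[of n op v])
qed

lemma perm_of_exps_bij: "bij_betw (perm_of_exps n op v) {..<n} {..<n}"
  unfolding perm_of_exps_def by (rule word_perm_bij[OF set_word_of_exps])

lemma perm_of_exps_less: "a < n \<Longrightarrow> perm_of_exps n op v a < n"
  unfolding perm_of_exps_def by (rule word_perm_less[OF set_word_of_exps])

lemma inj_perm_of_exps: "inj (perm_of_exps n op v)"
  unfolding perm_of_exps_def by (rule inj_word_perm[OF set_word_of_exps])

lemma perm_of_exps_unit:
  assumes "i < n" and "a < n"
  shows "perm_of_exps n op (\<lambda>b. if b = i then 1 else 0) a = op i a"
proof -
  have "perm_of_exps n op (\<lambda>b. if b = i then 1 else 0) = word_perm n op ([] @ [i])"
    using \<open>i < n\<close> by (intro word_perm_eq_perm_of_exps[symmetric]) auto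
  then show ?thesis
    using \<open>a < n\<close> by (simp only: word_perm_snoc) simp
qed

lemma perm_of_exps_add:
  "perm_of_exps n op (\<lambda>a. v a + w (perm_of_exps n op v a)) = perm_of_exps n op w \<circ> perm_of_exps n op v"
proof -
  let ?t = "perm_of_exps n op v"
  let ?u = "word_of_exps n (\<lambda>a. w (?t a))"
  have "perm_of_exps n op (\<lambda>a. v a + w (?t a)) = word_perm n op (word_of_exps n v @ ?u)"
    using set_word_of_exps by (intro word_perm_eq_perm_of_exps[symmetric]) (auto simp: count_word_of_exps)
  also have "\<dots> = word_perm n op (map ?t ?u) \<circ> ?t"
    using word_perm_append set_word_of_exps by (simp add: perm_of_exps_def)
  also have "word_perm n op (map ?t ?u) = perm_of_exps n op w"
  proof (rule word_perm_eq_perm_of_exps)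
    show "set (map ?t ?u) \<subseteq> {..<n}"
      using set_word_of_exps[of n] perm_of_exps_less by auto
    fix j
    assume "j < n"
    then obtain a where "a < n" and "j = ?t a"
      using perm_of_exps_bij[of v] unfolding bij_betw_def by auto
    then show "count (mset (map ?t ?u)) j = w j"
      using count_image_mset_inj[OF inj_perm_of_exps] by (simp add: count_word_of_exps)
  qed
  finally show ?thesis .
qed

lemma perm_of_exps_add_multiple:
  assumes "is_class n op d"
  shows "perm_of_exps n op (\<lambda>a. v a + d * c a) = perm_of_exps n op v"
proof -
  have "word_perm n op (u @ word_of_exps m (\<lambda>a. d * c a)) = word_perm n op u"
    if "set u \<subseteq> {..<n}" and "m \<le> n" for u m
    using that
  proof (induction m)
    case (Suc m)
    let ?u = "u @ word_of_exps m (\<lambda>a. d * c a)"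
    have "set ?u \<subseteq> {..<n}"
      using Suc.prems set_word_of_exps[of m] by force
    moreover from this have "word_perm n op ?u m < n"
      using Suc.prems word_perm_less by simp
    moreover have "set (replicate k m) \<subseteq> {..<n}" for k
      using Suc.prems by (cases k) auto
    ultimately show ?case
      using Suc word_perm_append[of ?u "replicate (d * c m) m"]
        word_perm_replicate_class_multiple[OF assms] by simp
  qed simp
  then have "word_perm n op (word_of_exps n v @ word_of_exps n (\<lambda>a. d * c a)) = perm_of_exps n op v"
    using set_word_of_exps by (simp add: perm_of_exps_def)
  moreover have "word_perm n op (word_of_exps n v @ word_of_exps n (\<lambda>a. d * c a)) =
      perm_of_exps n op (\<lambda>a. v a + d * c a)"
    using set_word_of_exps by (intro word_perm_eq_perm_of_exps) (auto simp: count_word_of_exps)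
  ultimately show ?thesis
    by simp
qed

lemma perm_of_exps_mod:
  assumes "is_class n op d"
  shows "perm_of_exps n op (\<lambda>a. v a mod d) = perm_of_exps n op v"
  using perm_of_exps_add_multiple[OF assms, of "\<lambda>a. v a mod d" "\<lambda>a. v a div d"] by simp

end

section \<open>Monomial matrices\<close>

lemma cis_power_inj:
  fixes d x y :: nat
  assumes "0 < d" and "x < d" and "y < d" and "cis (2 * pi / d) ^ x = cis (2 * pi / d) ^ y"
  shows "x = y"
proof -
  have "cis (2 * pi * real k / real d) = cis (2 * pi / d) ^ k" for k
    by (simp add: DeMoivre mult_ac)
  then show ?thesis
    using inj_onD[OF bij_betw_imp_inj_on[OF bij_betw_roots_unity[OF \<open>0 < d\<close>]]] assms by simp
qed

lemma cis_power_mod: "0 < (d::nat) \<Longrightarrow> cis (2 * pi / d) ^ (x mod d) = cis (2 * pi / d) ^ x"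
proof -
  assume "0 < d"
  then have "cis (2 * pi / d) ^ d = 1"
    by (simp add: DeMoivre)
  then have "cis (2 * pi / d) ^ x = cis (2 * pi / d) ^ (d * (x div d) + x mod d)"
    by simp
  also have "\<dots> = cis (2 * pi / d) ^ (x mod d)"
    using \<open>cis (2 * pi / d) ^ d = 1\<close> by (simp only: power_add power_mult) simp
  finally show ?thesis ..
qed

definition germ_elem :: "nat \<Rightarrow> (nat \<Rightarrow> nat \<Rightarrow> nat) \<Rightarrow> nat \<Rightarrow> (nat \<Rightarrow> nat) \<Rightarrow> complex mat" where
  "germ_elem n op d v =
     mat n n (\<lambda>(a, b). if b = perm_of_exps n op v a then cis (2 * pi / d) ^ v a else 0)"

lemma germ_elem_carrier [simp]: "germ_elem n op d v \<in> carrier_mat n n"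
  by (simp add: germ_elem_def)

lemma germ_elem_zero: "germ_elem n op d (\<lambda>a. 0) = 1\<^sub>m n"
  by (auto simp: germ_elem_def perm_of_exps_zero)

context
  fixes n :: nat and op :: "nat \<Rightarrow> nat \<Rightarrow> nat"
  assumes cycle_set: "cycle_set n op"
begin

lemma germ_elem_cong: "(\<And>a. a < n \<Longrightarrow> v a = v' a) \<Longrightarrow> germ_elem n op d v = germ_elem n op d v'"
  using perm_of_exps_cong[OF cycle_set, of v v'] by (auto simp: germ_elem_def)

lemma germ_elem_mod:
  assumes "is_class n op d"
  shows "germ_elem n op d (\<lambda>a. v a mod d) = germ_elem n op d v"
proof -
  have "0 < d"
    using assms by (simp add: is_class_def)
  then show ?thesis
    using perm_of_exps_mod[OF cycle_set assms] by (auto simp: germ_elem_def cis_power_mod)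
qed

lemma germ_elem_mult:
  "germ_elem n op d v * germ_elem n op d w = germ_elem n op d (\<lambda>a. v a + w (perm_of_exps n op v a))"
proof (rule eq_matI)
  fix a b
  assume "a < dim_row (germ_elem n op d (\<lambda>a. v a + w (perm_of_exps n op v a)))"
    and "b < dim_col (germ_elem n op d (\<lambda>a. v a + w (perm_of_exps n op v a)))"
  then have "a < n" and "b < n"
    by (simp_all add: germ_elem_def)
  let ?t = "perm_of_exps n op v"
  have "?t a < n"
    using perm_of_exps_less[OF cycle_set \<open>a < n\<close>] .
  have "(germ_elem n op d v * germ_elem n op d w) $$ (a, b) =
      (\<Sum>c\<in>{0..<n}. germ_elem n op d v $$ (a, c) * germ_elem n op d w $$ (c, b))"
    using \<open>a < n\<close> \<open>b < n\<close> by (simp add: germ_elem_def scalar_prod_def)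
  also have "\<dots> = germ_elem n op d v $$ (a, ?t a) * germ_elem n op d w $$ (?t a, b)"
    using \<open>a < n\<close> \<open>?t a < n\<close> by (subst sum.remove[of _ "?t a"]) (auto simp: germ_elem_def)
  also have "\<dots> = germ_elem n op d (\<lambda>a. v a + w (?t a)) $$ (a, b)"
    using \<open>a < n\<close> \<open>b < n\<close> \<open>?t a < n\<close> perm_of_exps_add[OF cycle_set, of v w]
    by (simp add: germ_elem_def power_add)
  finally show "(germ_elem n op d v * germ_elem n op d w) $$ (a, b) =
      germ_elem n op d (\<lambda>a. v a + w (?t a)) $$ (a, b)" .
qed (simp_all add: germ_elem_def)

lemma germ_elem_mult_inv_perm:
  "germ_elem n op d v * germ_elem n op d (\<lambda>j. f (inv_into {..<n} (perm_of_exps n op v) j)) =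
     germ_elem n op d (\<lambda>a. v a + f a)"
  unfolding germ_elem_mult
  using perm_of_exps_bij[OF cycle_set] by (intro germ_elem_cong) (simp add: bij_betw_def)

lemma germ_elem_inj:
  assumes "0 < d" and "\<And>a. a < n \<Longrightarrow> v a < d" and "\<And>a. a < n \<Longrightarrow> w a < d"
    and "germ_elem n op d v = germ_elem n op d w" and "a < n"
  shows "v a = w a"
proof -
  have "germ_elem n op d v $$ (a, perm_of_exps n op v a) = germ_elem n op d w $$ (a, perm_of_exps n op v a)"
    using assms(4) by simp
  then have "cis (2 * pi / d) ^ v a = cis (2 * pi / d) ^ w a"
    using \<open>a < n\<close> perm_of_exps_less[OF cycle_set \<open>a < n\<close>]
    by (auto simp: germ_elem_def split: if_splits)
  then show ?thesis
    using cis_power_inj assms by blast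
qed

lemma bar_gen_eq_germ_elem: "i < n \<Longrightarrow> bar_gen n op d i = germ_elem n op d (\<lambda>a. if a = i then 1 else 0)"
  by (auto simp: bar_gen_def germ_elem_def perm_of_exps_unit[OF cycle_set])

end

section \<open>The germ inside the general linear group\<close>

lemma GL_simps [simp]: "monoid.mult (GL n) = (*)" "one (GL n) = 1\<^sub>m n"
  by (simp_all add: GL_def)

lemma GL_eq_units_of: "GL n = units_of (ring_mat TYPE(complex) n ())"
proof -
  have "invertible_mat A \<longleftrightarrow> (\<exists>B\<in>carrier_mat n n. B * A = 1\<^sub>m n \<and> A * B = 1\<^sub>m n)"
    if A: "A \<in> carrier_mat n n" for A :: "complex mat"
  proof
    assume "invertible_mat A"
    then obtain B where AB: "A * B = 1\<^sub>m n" and BA: "B * A = 1\<^sub>m (dim_row B)"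
      using A unfolding invertible_mat_def inverts_mat_def by auto
    have "dim_col B = n"
      using arg_cong[OF AB, of dim_col] by simp
    moreover have "dim_row B = n"
      using arg_cong[OF BA, of dim_col] A by simp
    ultimately show "\<exists>B\<in>carrier_mat n n. B * A = 1\<^sub>m n \<and> A * B = 1\<^sub>m n"
      using AB BA by auto
  next
    assume "\<exists>B\<in>carrier_mat n n. B * A = 1\<^sub>m n \<and> A * B = 1\<^sub>m n"
    then show "invertible_mat A"
      using A unfolding invertible_mat_def inverts_mat_def by auto
  qed
  then show ?thesis
    unfolding GL_def units_of_def Units_def ring_mat_simps by auto
qed

lemma carrier_GL: "carrier (GL n) = {A \<in> carrier_mat n n. \<exists>B\<in>carrier_mat n n. B * A = 1\<^sub>m n \<and> A * B = 1\<^sub>m n}"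
  by (simp add: GL_eq_units_of units_of_carrier Units_def ring_mat_simps)

lemma group_GL: "group (GL n)"
  unfolding GL_eq_units_of by (rule monoid.units_group[OF ring.is_monoid[OF ring_mat]])

lemma germ_simps [simp]: "monoid.mult (germ n op d) = (*)" "one (germ n op d) = 1\<^sub>m n"
  by (simp_all add: germ_def)

lemma bar_pow_Suc: "bar_pow n op d (Suc k) s = bar_gen n op d s * bar_pow n op d k (T_map op s)"
proof -
  have "[0..<Suc k] = 0 # map Suc [0..<k]"
    by (simp add: upt_conv_Cons map_Suc_upt)
  then show ?thesis
    by (simp add: bar_pow_def foldr_map o_def funpow_swap1)
qed

section \<open>The subgroups of exponent vectors divisible by m\<close>

definition exps_dvd :: "nat \<Rightarrow> nat \<Rightarrow> nat \<Rightarrow> (nat \<Rightarrow> nat) set" where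
  "exps_dvd n d m = {..<n} \<rightarrow>\<^sub>E {x. x < d \<and> m dvd x}"

definition reduce_exps :: "nat \<Rightarrow> nat \<Rightarrow> (nat \<Rightarrow> nat) \<Rightarrow> nat \<Rightarrow> nat" where
  "reduce_exps n d u = restrict (\<lambda>a. u a mod d) {..<n}"

lemma reduce_exps_in_exps_dvd:
  "0 < d \<Longrightarrow> m dvd d \<Longrightarrow> (\<And>a. a < n \<Longrightarrow> m dvd u a) \<Longrightarrow> reduce_exps n d u \<in> exps_dvd n d m"
  by (auto simp: exps_dvd_def reduce_exps_def dvd_mod)

lemma exps_dvd_mono: "m dvd k \<Longrightarrow> exps_dvd n d k \<subseteq> exps_dvd n d m"
  by (auto simp: exps_dvd_def intro: dvd_trans)

lemma exps_dvd_less: "v \<in> exps_dvd n d m \<Longrightarrow> a < n \<Longrightarrow> v a < d"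
  by (auto simp: exps_dvd_def)

lemma exps_dvd_dvd: "v \<in> exps_dvd n d m \<Longrightarrow> a < n \<Longrightarrow> m dvd v a"
  by (auto simp: exps_dvd_def)

lemma card_multiples_below:
  fixes m d :: nat
  assumes "0 < m" and "m dvd d"
  shows "card {x. x < d \<and> m dvd x} = d div m"
proof -
  have "{x. x < d \<and> m dvd x} = (\<lambda>y. m * y) ` {..<d div m}"
    using assms by (auto simp: dvd_def less_mult_imp_div_less)
  moreover have "inj_on (\<lambda>y. m * y) {..<d div m}"
    using assms by (auto intro: inj_onI)
  ultimately show ?thesis
    by (simp add: card_image)
qed

lemma card_exps_dvd: "0 < m \<Longrightarrow> m dvd d \<Longrightarrow> card (exps_dvd n d m) = (d div m) ^ n"
  by (simp add: exps_dvd_def card_PiE card_multiples_below)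

definition germ_dvd :: "nat \<Rightarrow> (nat \<Rightarrow> nat \<Rightarrow> nat) \<Rightarrow> nat \<Rightarrow> nat \<Rightarrow> complex mat set" where
  "germ_dvd n op d m = germ_elem n op d ` exps_dvd n d m"

lemma germ_dvd_carrier: "x \<in> germ_dvd n op d m \<Longrightarrow> x \<in> carrier_mat n n"
  by (auto simp: germ_dvd_def)

context
  fixes n :: nat and op :: "nat \<Rightarrow> nat \<Rightarrow> nat" and d :: nat
  assumes cycle_set: "cycle_set n op" and class_d: "is_class n op d"
begin

lemma class_pos: "0 < d"
  using class_d by (simp add: is_class_def)

lemma germ_elem_reduce: "germ_elem n op d (reduce_exps n d u) = germ_elem n op d u"
proof -
  have "germ_elem n op d (reduce_exps n d u) = germ_elem n op d (\<lambda>a. u a mod d)"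
    by (rule germ_elem_cong[OF cycle_set]) (simp add: reduce_exps_def)
  then show ?thesis
    using germ_elem_mod[OF cycle_set class_d] by simp
qed

lemma germ_elem_in_germ_dvd:
  "m dvd d \<Longrightarrow> (\<And>a. a < n \<Longrightarrow> m dvd u a) \<Longrightarrow> germ_elem n op d u \<in> germ_dvd n op d m"
  unfolding germ_dvd_def
  by (metis germ_elem_reduce image_eqI reduce_exps_in_exps_dvd class_pos)

lemma card_germ_dvd:
  assumes "0 < m" and "m dvd d"
  shows "card (germ_dvd n op d m) = (d div m) ^ n"
proof -
  have "inj_on (germ_elem n op d) (exps_dvd n d m)"
  proof (rule inj_onI)
    fix v w
    assume "v \<in> exps_dvd n d m" and "w \<in> exps_dvd n d m" and "germ_elem n op d v = germ_elem n op d w"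
    then show "v = w"
      unfolding exps_dvd_def by (auto intro: PiE_ext germ_elem_inj[OF cycle_set class_pos])
  qed
  then show ?thesis
    using assms by (simp add: germ_dvd_def card_image card_exps_dvd)
qed

lemma germ_dvd_mult:
  assumes "k dvd d" and "x \<in> germ_dvd n op d k" and "y \<in> germ_dvd n op d l"
  shows "x * y \<in> germ_dvd n op d (gcd k l)"
proof -
  obtain v w where "v \<in> exps_dvd n d k" "w \<in> exps_dvd n d l"
    and "x = germ_elem n op d v" "y = germ_elem n op d w"
    using assms by (auto simp: germ_dvd_def)
  moreover have "gcd k l dvd v a + w (perm_of_exps n op v a)" if "a < n" for a
    using \<open>v \<in> exps_dvd n d k\<close> \<open>w \<in> exps_dvd n d l\<close> that perm_of_exps_less[OF cycle_set]
    by (meson dvd_add dvd_trans exps_dvd_dvd gcd_dvd1 gcd_dvd2)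
  moreover have "gcd k l dvd d"
    using assms(1) by (meson dvd_trans gcd_dvd1)
  ultimately show ?thesis
    by (simp add: germ_elem_mult[OF cycle_set] germ_elem_in_germ_dvd)
qed

lemma germ_dvd_right_inverse:
  assumes "m dvd d" and "x \<in> germ_dvd n op d m"
  shows "\<exists>y\<in>germ_dvd n op d m. x * y = 1\<^sub>m n"
proof -
  obtain v where v: "v \<in> exps_dvd n d m" and x: "x = germ_elem n op d v"
    using assms by (auto simp: germ_dvd_def)
  let ?t = "perm_of_exps n op v"
  let ?y = "germ_elem n op d (\<lambda>j. d - v (inv_into {..<n} ?t j))"
  have "x * ?y = germ_elem n op d (\<lambda>a. v a + (d - v a))"
    unfolding x by (rule germ_elem_mult_inv_perm[OF cycle_set])
  also have "\<dots> = germ_elem n op d (\<lambda>a. d)"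
    using exps_dvd_less[OF v] by (intro germ_elem_cong[OF cycle_set]) (simp add: less_imp_le)
  also have "\<dots> = 1\<^sub>m n"
    using germ_elem_mod[OF cycle_set class_d, of "\<lambda>a. d"] by (simp add: germ_elem_zero)
  finally have "x * ?y = 1\<^sub>m n" .
  moreover have "inv_into {..<n} ?t j < n" if "j < n" for j
    using perm_of_exps_bij[OF cycle_set, of v] that inv_into_into[of j ?t "{..<n}"]
    by (auto simp: bij_betw_def)
  then have "?y \<in> germ_dvd n op d m"
    using assms(1) exps_dvd_dvd[OF v] by (intro germ_elem_in_germ_dvd) auto
  ultimately show ?thesis
    by blast
qed

lemma germ_dvd_inverse:
  assumes "m dvd d" and "x \<in> germ_dvd n op d m"
  shows "\<exists>y\<in>germ_dvd n op d m. x * y = 1\<^sub>m n \<and> y * x = 1\<^sub>m n"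
proof -
  obtain y where y: "y \<in> germ_dvd n op d m" "x * y = 1\<^sub>m n"
    using germ_dvd_right_inverse assms by blast
  obtain z where z: "z \<in> germ_dvd n op d m" "y * z = 1\<^sub>m n"
    using germ_dvd_right_inverse assms(1) y(1) by blast
  have carrier: "x \<in> carrier_mat n n" "y \<in> carrier_mat n n" "z \<in> carrier_mat n n"
    using germ_dvd_carrier assms(2) y(1) z(1) by blast+
  have "x = (x * y) * z"
    using carrier z(2) by (simp add: assoc_mult_mat[of x n n y n z n])
  then have "x = z"
    using carrier y(2) by simp
  then show ?thesis
    using y z by blast
qed

lemma one_in_germ_dvd: "m dvd d \<Longrightarrow> 1\<^sub>m n \<in> germ_dvd n op d m"
  using germ_elem_in_germ_dvd[of m "\<lambda>a. 0"] by (simp add: germ_elem_zero)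

lemma subgroup_GL_germ_dvd:
  assumes "m dvd d"
  shows "subgroup (germ_dvd n op d m) (GL n)"
proof (rule group.subgroupI[OF group_GL])
  show "germ_dvd n op d m \<subseteq> carrier (GL n)"
    using germ_dvd_inverse[OF assms] germ_dvd_carrier by (fastforce simp: carrier_GL)
  show "germ_dvd n op d m \<noteq> {}"
    using one_in_germ_dvd[OF assms] by blast
next
  fix x
  assume x: "x \<in> germ_dvd n op d m"
  then obtain y where y: "y \<in> germ_dvd n op d m" "x * y = 1\<^sub>m n" "y * x = 1\<^sub>m n"
    using germ_dvd_inverse[OF assms] by blast
  then have "inv\<^bsub>GL n\<^esub> x = y"
    using x germ_dvd_carrier by (intro group.inv_equality[OF group_GL]) (auto simp: carrier_GL)
  then show "inv\<^bsub>GL n\<^esub> x \<in> germ_dvd n op d m"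
    using y by simp
next
  fix x y
  assume "x \<in> germ_dvd n op d m" and "y \<in> germ_dvd n op d m"
  then show "x \<otimes>\<^bsub>GL n\<^esub> y \<in> germ_dvd n op d m"
    using germ_dvd_mult[OF assms] by fastforce
qed

lemma germ_dvd_self: "germ_dvd n op d d = {1\<^sub>m n}"
proof -
  have "germ_elem n op d v = 1\<^sub>m n" if "v \<in> exps_dvd n d d" for v
  proof -
    have "v a = 0" if "a < n" for a
      using exps_dvd_less[OF \<open>v \<in> exps_dvd n d d\<close> that] exps_dvd_dvd[OF \<open>v \<in> exps_dvd n d d\<close> that]
      by (auto elim: dvdE)
    then show ?thesis
      using germ_elem_cong[OF cycle_set] germ_elem_zero by metis
  qed
  then show ?thesis
    using one_in_germ_dvd[of d] by (auto simp: germ_dvd_def)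
qed

lemma germ_elem_in_generate:
  assumes "monoid.mult H = (*)" and "one H = 1\<^sub>m n" and "v \<in> exps_dvd n d k"
  shows "germ_elem n op d v \<in> generate H ((\<lambda>s. germ_elem n op d (\<lambda>a. if a = s then k else 0)) ` {0..<n})"
    (is "_ \<in> generate H ?gens")
proof -
  have "germ_elem n op d (\<lambda>a. k * count (mset w) a) \<in> generate H ?gens" if "set w \<subseteq> {..<n}" for w
    using that
  proof (induction w rule: rev_induct)
    case Nil
    then show ?case
      using generate.one[of H] assms(2) by (simp add: germ_elem_zero)
  next
    case (snoc i w)
    let ?t = "perm_of_exps n op (\<lambda>a. k * count (mset w) a)"
    have "?t i < n"
      using snoc.prems perm_of_exps_less[OF cycle_set] by simp
    then have "germ_elem n op d (\<lambda>a. if a = ?t i then k else 0) \<in> generate H ?gens"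
      by (intro generate.incl) auto
    moreover have "germ_elem n op d (\<lambda>a. k * count (mset w) a) \<in> generate H ?gens"
      using snoc by simp
    moreover have "germ_elem n op d (\<lambda>a. k * count (mset w) a) * germ_elem n op d (\<lambda>a. if a = ?t i then k else 0)
        = germ_elem n op d (\<lambda>a. k * count (mset (w @ [i])) a)"
      using inj_perm_of_exps[OF cycle_set]
      by (auto simp: germ_elem_mult[OF cycle_set] inj_eq intro!: germ_elem_cong[OF cycle_set])
    ultimately show ?case
      using generate.eng[of _ H ?gens] assms(1) by metis
  qed
  moreover have "germ_elem n op d v = germ_elem n op d (\<lambda>a. k * count (mset (word_of_exps n (\<lambda>a. v a div k))) a)"
    using exps_dvd_dvd[OF assms(3)] by (intro germ_elem_cong[OF cycle_set]) (simp add: count_word_of_exps)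
  ultimately show ?thesis
    using set_word_of_exps by metis
qed

lemma generate_eq_germ_dvd:
  assumes "group H" and "monoid.mult H = (*)" and "one H = 1\<^sub>m n"
    and "k dvd d" and "subgroup (germ_dvd n op d k) H"
  shows "generate H ((\<lambda>s. germ_elem n op d (\<lambda>a. if a = s then k else 0)) ` {0..<n}) = germ_dvd n op d k"
proof
  have "(\<lambda>s. germ_elem n op d (\<lambda>a. if a = s then k else 0)) ` {0..<n} \<subseteq> germ_dvd n op d k"
    using \<open>k dvd d\<close> by (auto intro: germ_elem_in_germ_dvd)
  then show "generate H ((\<lambda>s. germ_elem n op d (\<lambda>a. if a = s then k else 0)) ` {0..<n}) \<subseteq> germ_dvd n op d k"
    by (rule group.generate_subgroup_incl[OF \<open>group H\<close> _ assms(5)])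
  show "germ_dvd n op d k \<subseteq> generate H ((\<lambda>s. germ_elem n op d (\<lambda>a. if a = s then k else 0)) ` {0..<n})"
    using germ_elem_in_generate[OF assms(2,3)] by (auto simp: germ_dvd_def)
qed

lemma carrier_germ: "carrier (germ n op d) = germ_dvd n op d 1"
proof -
  have "bar_gen n op d ` {0..<n} = (\<lambda>s. germ_elem n op d (\<lambda>a. if a = s then 1 else 0)) ` {0..<n}"
    using bar_gen_eq_germ_elem[OF cycle_set] by simp
  then show ?thesis
    using generate_eq_germ_dvd[OF group_GL _ _ _ subgroup_GL_germ_dvd] by (simp add: germ_def GL_def)
qed

lemma group_germ: "group (germ n op d)"
  using group.subgroup_imp_group[OF group_GL subgroup_GL_germ_dvd[of 1]] carrier_germ
  by (simp add: germ_def)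

lemma subgroup_germ_germ_dvd: "k dvd d \<Longrightarrow> subgroup (germ_dvd n op d k) (germ n op d)"
  using group.subgroup_incl[OF group_GL subgroup_GL_germ_dvd subgroup_GL_germ_dvd[of 1]]
    exps_dvd_mono[of 1 k] carrier_germ
  by (simp add: germ_def germ_dvd_def image_mono)

lemma bar_pow_eq_germ_elem: "s < n \<Longrightarrow> bar_pow n op d k s = germ_elem n op d (\<lambda>a. if a = s then k else 0)"
proof (induction k arbitrary: s)
  case 0
  then show ?case
    by (simp add: bar_pow_def germ_elem_zero)
next
  case (Suc k)
  have "T_map op s < n"
    using op_bij[OF cycle_set Suc.prems] Suc.prems by (auto simp: T_map_def dest: bij_betwE)
  moreover have "op s a = T_map op s \<longleftrightarrow> a = s" if "a < n" for a
    using op_bij[OF cycle_set Suc.prems] Suc.prems that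
    by (auto simp: T_map_def dest: bij_betw_imp_inj_on inj_onD)
  ultimately show ?case
    using Suc by (auto simp: bar_pow_Suc bar_gen_eq_germ_elem[OF cycle_set] germ_elem_mult[OF cycle_set]
        perm_of_exps_unit[OF cycle_set] intro!: germ_elem_cong[OF cycle_set])
qed

lemma germ_k_eq_germ_dvd: "k dvd d \<Longrightarrow> germ_k n op d k = germ_dvd n op d k"
  unfolding germ_k_def
  using bar_pow_eq_germ_elem generate_eq_germ_dvd[OF group_germ _ _ _ subgroup_germ_germ_dvd] by simp

lemma germ_dvd_gcd_subset:
  assumes "k dvd d" and "l dvd d"
  shows "germ_dvd n op d (gcd k l) \<subseteq> germ_dvd n op d k <#>\<^bsub>germ n op d\<^esub> germ_dvd n op d l"
proof
  fix x
  assume "x \<in> germ_dvd n op d (gcd k l)"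
  then obtain u where u: "u \<in> exps_dvd n d (gcd k l)" and x: "x = germ_elem n op d u"
    by (auto simp: germ_dvd_def)
  have "k \<noteq> 0"
    using assms(1) class_pos by auto
  then obtain p q where bezout: "k * p = l * q + gcd k l"
    using bezout_nat by blast
  define c where "c a = u a div gcd k l" for a
  define v where "v a = k * p * c a" for a
  define f where "f a = l * q * (d - 1) * c a" for a
  let ?w = "\<lambda>j. f (inv_into {..<n} (perm_of_exps n op v) j)"
  \<comment> \<open>Since \<open>d - 1\<close> acts as \<open>-1\<close> on exponents, \<open>v + f\<close> is \<open>gcd k l * c = u\<close> modulo \<open>d\<close>.\<close>
  have "(v a + f a) mod d = u a mod d" if "a < n" for a
  proof -
    have "v a + f a = gcd k l * c a + (l * q * c a + l * q * (d - 1) * c a)"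
      by (simp add: v_def f_def bezout algebra_simps)
    also have "l * q * c a + l * q * (d - 1) * c a = d * (l * q * c a)"
      using class_pos by (cases d) (simp_all add: algebra_simps)
    finally show ?thesis
      using exps_dvd_dvd[OF u that] by (simp add: c_def)
  qed
  then have "germ_elem n op d (\<lambda>a. (v a + f a) mod d) = germ_elem n op d (\<lambda>a. u a mod d)"
    by (rule germ_elem_cong[OF cycle_set])
  then have "germ_elem n op d (\<lambda>a. v a + f a) = x"
    by (simp add: x germ_elem_mod[OF cycle_set class_d])
  then have "germ_elem n op d v * germ_elem n op d ?w = x"
    by (simp add: germ_elem_mult_inv_perm[OF cycle_set])
  moreover have "germ_elem n op d v \<in> germ_dvd n op d k" and "germ_elem n op d ?w \<in> germ_dvd n op d l"
    using assms by (auto simp: v_def f_def intro!: germ_elem_in_germ_dvd)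
  ultimately show "x \<in> germ_dvd n op d k <#>\<^bsub>germ n op d\<^esub> germ_dvd n op d l"
    unfolding set_mult_def by force
qed

lemma set_mult_germ_dvd:
  assumes "k dvd d" and "l dvd d"
  shows "germ_dvd n op d k <#>\<^bsub>germ n op d\<^esub> germ_dvd n op d l = germ_dvd n op d (gcd k l)"
  using germ_dvd_gcd_subset[OF assms] germ_dvd_mult[OF assms(1)]
  by (auto simp: set_mult_def)

lemma foldr_set_mult_germ_dvd:
  "(\<And>p. p \<in> set ps \<Longrightarrow> k p dvd d) \<Longrightarrow>
     foldr (\<lambda>p acc. germ_dvd n op d (k p) <#>\<^bsub>germ n op d\<^esub> acc) ps {1\<^sub>m n} =
     germ_dvd n op d (foldr (\<lambda>p. gcd (k p)) ps d)"
proof (induction ps)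
  case Nil
  then show ?case
    by (simp add: germ_dvd_self)
next
  case (Cons p ps)
  then show ?case
    using set_mult_germ_dvd dvd_foldr_gcd_iff[of "foldr (\<lambda>p. gcd (k p)) ps d" k ps d] by simp
qed

lemma sylow_subgroup_germ_dvd:
  assumes "prime p"
  shows "sylow_subgroup (germ n op d) p (germ_dvd n op d (d div p ^ multiplicity p d))"
proof -
  let ?a = "multiplicity p d"
  have factor: "d div p ^ ?a * p ^ ?a = d"
    by (simp add: multiplicity_dvd)
  then have "0 < d div p ^ ?a"
    using class_pos by (cases "d div p ^ ?a") simp_all
  have "d div (d div p ^ ?a) = (d div p ^ ?a * p ^ ?a) div (d div p ^ ?a)"
    by (simp only: factor)
  also have "\<dots> = p ^ ?a"
    using \<open>0 < d div p ^ ?a\<close> by simp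
  finally have "card (germ_dvd n op d (d div p ^ ?a)) = p ^ (?a * n)"
    using \<open>0 < d div p ^ ?a\<close> div_power_multiplicity_dvd by (simp add: card_germ_dvd power_mult)
  moreover have "order (germ n op d) = d ^ n"
    by (simp add: order_def carrier_germ card_germ_dvd)
  moreover have "multiplicity p (d ^ n) = n * ?a"
    using assms class_pos by (simp add: prime_elem_multiplicity_power_distrib)
  ultimately show ?thesis
    using subgroup_germ_germ_dvd div_power_multiplicity_dvd by (simp add: sylow_subgroup_def mult.commute)
qed

end

theorem mainTheorem3:
  fixes n d :: nat and op :: "nat \<Rightarrow> nat \<Rightarrow> nat"
  assumes "cycle_set n op" and "is_class n op d" and "d > 1"
  shows "(\<forall>p \<in> prime_factors d.
            sylow_subgroup (germ n op d) p (germ_k n op d (d div p ^ multiplicity p d)))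
       \<and> (\<forall>p \<in> prime_factors d. \<forall>q \<in> prime_factors d.
            germ_k n op d (d div p ^ multiplicity p d) <#>\<^bsub>germ n op d\<^esub> germ_k n op d (d div q ^ multiplicity q d)
          = germ_k n op d (d div q ^ multiplicity q d) <#>\<^bsub>germ n op d\<^esub> germ_k n op d (d div p ^ multiplicity p d))
       \<and> (\<forall>ps. distinct ps \<and> set ps = prime_factors d \<longrightarrow>
            carrier (germ n op d) =
              foldr (\<lambda>p acc. germ_k n op d (d div p ^ multiplicity p d) <#>\<^bsub>germ n op d\<^esub> acc) ps
                {\<one>\<^bsub>germ n op d\<^esub>})"
proof -
  have germ_k: "germ_k n op d (d div p ^ multiplicity p d) = germ_dvd n op d (d div p ^ multiplicity p d)" for p
    using germ_k_eq_germ_dvd[OF assms(1,2) div_power_multiplicity_dvd] .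
  have "carrier (germ n op d) =
      foldr (\<lambda>p acc. germ_dvd n op d (d div p ^ multiplicity p d) <#>\<^bsub>germ n op d\<^esub> acc) ps {1\<^sub>m n}"
    if "set ps = prime_factors d" for ps
    using foldr_set_mult_germ_dvd[OF assms(1,2), of ps "\<lambda>p. d div p ^ multiplicity p d"] div_power_multiplicity_dvd
      foldr_gcd_div_prime_powers[OF class_pos[OF assms(1,2)] that]
    by (simp add: carrier_germ[OF assms(1,2)])
  then show ?thesis
    unfolding germ_k
    by (simp add: sylow_subgroup_germ_dvd[OF assms(1,2)] set_mult_germ_dvd[OF assms(1,2) div_power_multiplicity_dvd div_power_multiplicity_dvd]
        gcd.commute in_prime_factors_iff)
qed

end
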